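(* Let $T$ be an equidistant tree with $n$ leaves and ultrametric $u$, and let $t_1<t_2<\dots<t_k$ ($k\le n-1$) be its speciation times. For $i=1,\dots,k$ let $T^i$ be the equidistant tree whose ultrametric $w^i$ is given by $w^i_{pq}=\max\{2t_i,\,u_{pq}\}$ for all leaves $p<q$ (so $T^1=T$ and $T^k$ is the star tree). Then the tropical line segment in $\mathcal{U}_n$ from $u$ to the origin (the ultrametric of the star tree with $n$ leaves) is the union of the ordinary line segments between the ultrametrics $w^i$ and $w^{i+1}$ of $T^i$ and $T^{i+1}$, for $i=1,\dots,k-1$.
   Context: Max-plus arithmetic: $a\oplus b=\max\{a,b\}$, $a\odot b=a+b$; $e=\binom n2$; points of $\mathbb{R}^e$ (coordinates indexed by pairs $p<q$ of leaves in $\{1,\dots,n\}$) are considered modulo $\mathbb{R}\mathbf 1$, so the origin is the class of constant vectors. An equidistant tree is a rooted phylogenetic tree with nonnegative edge lengths and all root-to-leaf distances equal; its ultrametric $u$ is the vector of pairwise leaf distances $u_{pq}$ (for all distinct $p,q,r$ the maximum of $u_{pq},u_{pr},u_{qr}$ is attained at least twice); $\mathcal U_n$ is the set of ultrametrics in $\mathbb{R}^e/\mathbb{R}\mathbf 1$. The star tree has all leaves attached to the root; its ultrametric is constant. The speciation times of $T$ are the distinct values of $u_{pq}/2$, listed in increasing order $t_1<\dots<t_k$ (the heights above the leaves of the internal nodes). The tropical line segment between $x$ and $y$ is $\{a\odot x\oplus b\odot y:a,b\in\mathbb{R}\}$. *)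

theory Defs
  imports Main "HOL-Library.Set_Algebras" Complex_Main
begin

text \<open>Points of R^e, e = n choose 2, are represented as functions
  x :: nat \<Rightarrow> nat \<Rightarrow> real, of which only the values x p q with
  1 \<le> p < q \<le> n are relevant.\<close>

type_synonym pvec = "nat \<Rightarrow> nat \<Rightarrow> real"

definition leaf_pairs :: "nat \<Rightarrow> (nat \<times> nat) set" where
  "leaf_pairs n = {(p, q). 1 \<le> p \<and> p < q \<and> q \<le> n}"

text \<open>Equality in R^e / R1 (modulo adding a constant vector).\<close>
definition mod_eq :: "nat \<Rightarrow> pvec \<Rightarrow> pvec \<Rightarrow> bool" where
  "mod_eq n x y \<longleftrightarrow> (\<exists>c::real. \<forall>(p, q) \<in> leaf_pairs n. x p q = y p q + c)"

definition sym_dist :: "pvec \<Rightarrow> nat \<Rightarrow> nat \<Rightarrow> real" where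
  "sym_dist u p q = (if p < q then u p q else u q p)"

definition is_ultrametric :: "nat \<Rightarrow> pvec \<Rightarrow> bool" where
  "is_ultrametric n u \<longleftrightarrow>
     (\<forall>(p, q) \<in> leaf_pairs n. 0 \<le> u p q) \<and>
     (\<forall>p q r. p \<in> {1..n} \<and> q \<in> {1..n} \<and> r \<in> {1..n} \<and> p \<noteq> q \<and> p \<noteq> r \<and> q \<noteq> r \<longrightarrow>
        sym_dist u p q \<le> max (sym_dist u p r) (sym_dist u q r) \<and>
        sym_dist u p r \<le> max (sym_dist u p q) (sym_dist u q r) \<and>
        sym_dist u q r \<le> max (sym_dist u p q) (sym_dist u p r))"

definition speciation_times :: "nat \<Rightarrow> pvec \<Rightarrow> real set" where
  "speciation_times n u = {u p q / 2 | p q. (p, q) \<in> leaf_pairs n}"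

text \<open>Tropical line segment between x and y, as a subset of R^e / R1
  (represented by the set of all representatives of its classes).\<close>
definition trop_segment :: "nat \<Rightarrow> pvec \<Rightarrow> pvec \<Rightarrow> pvec set" where
  "trop_segment n x y =
     {z. \<exists>a b::real. mod_eq n z (\<lambda>p q. max (a + x p q) (b + y p q))}"

definition ord_segment :: "nat \<Rightarrow> pvec \<Rightarrow> pvec \<Rightarrow> pvec set" where
  "ord_segment n x y =
     {z. \<exists>l::real. 0 \<le> l \<and> l \<le> 1 \<and> mod_eq n z (\<lambda>p q. (1 - l) * x p q + l * y p q)}"

end

theory Submission
  imports Defs "HOL-Analysis.Line_Segment"
begin

text \<open>Modulo constants, \<open>a \<odot> u \<oplus> b \<odot> 0\<close> is the truncation \<open>max c u\<close> with \<open>c = b - a\<close>,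
  so the tropical segment from \<open>u\<close> to the origin consists of the classes of the truncations
  of \<open>u\<close> at all levels \<open>c\<close>. Levels below the smallest entry \<open>2 t\<^sub>1\<close> of \<open>u\<close> give \<open>u\<close> itself and
  levels above the largest entry \<open>2 t\<^sub>k\<close> give constant vectors, so only \<open>c \<in> [2 t\<^sub>1, 2 t\<^sub>k]\<close>
  matters. For \<open>c\<close> between consecutive values \<open>2 t\<^sub>i\<close> and \<open>2 t\<^sub>i\<^sub>+\<^sub>1\<close> no entry of \<open>u\<close> lies
  strictly between, so every coordinate of \<open>max c u\<close> is affine in \<open>c\<close>: these truncations form
  the ordinary segment from \<open>w\<^sup>i\<close> to \<open>w\<^sup>i\<^sup>+\<^sup>1\<close>.\<close>

definition truncation_classes :: "nat \<Rightarrow> pvec \<Rightarrow> real set \<Rightarrow> pvec set" where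
  "truncation_classes n u C = {z. \<exists>c\<in>C. mod_eq n z (\<lambda>p q. max c (u p q))}"

lemma mod_eq_trans:
  assumes "mod_eq n x y" "mod_eq n y z"
  shows "mod_eq n x z"
proof -
  obtain c d where "\<forall>(p, q) \<in> leaf_pairs n. x p q = y p q + c"
    and "\<forall>(p, q) \<in> leaf_pairs n. y p q = z p q + d"
    using assms unfolding mod_eq_def by blast
  then show ?thesis
    unfolding mod_eq_def by (intro exI[of _ "c + d"]) fastforce
qed

lemma mod_eq_shiftI:
  "(\<And>p q. (p, q) \<in> leaf_pairs n \<Longrightarrow> x p q = y p q + c) \<Longrightarrow> mod_eq n x y"
  unfolding mod_eq_def by blast

lemma mod_eq_cong_right:
  assumes "\<And>p q. (p, q) \<in> leaf_pairs n \<Longrightarrow> y p q = y' p q"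
  shows "mod_eq n z y \<longleftrightarrow> mod_eq n z y'"
proof -
  have "(\<forall>(p, q) \<in> leaf_pairs n. z p q = y p q + c) \<longleftrightarrow>
      (\<forall>(p, q) \<in> leaf_pairs n. z p q = y' p q + c)" for c
    using assms by auto
  then show ?thesis
    unfolding mod_eq_def by simp
qed

lemma truncation_classes_UN:
  "truncation_classes n u (\<Union>i\<in>I. C i) = (\<Union>i\<in>I. truncation_classes n u (C i))"
  unfolding truncation_classes_def by blast

lemma trop_segment_origin:
  "trop_segment n u (\<lambda>p q. 0) = truncation_classes n u UNIV"
proof -
  have "mod_eq n (\<lambda>p q. max (a + u p q) (b + 0)) (\<lambda>p q. max (b - a) (u p q))" for a b
    by (rule mod_eq_shiftI[where c = a]) auto
  moreover have "mod_eq n (\<lambda>p q. max c (u p q)) (\<lambda>p q. max (0 + u p q) (c + 0))" for c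
    by (rule mod_eq_shiftI[where c = 0]) auto
  ultimately show ?thesis
    unfolding trop_segment_def truncation_classes_def by (blast intro: mod_eq_trans)
qed

lemma truncation_class_clamp:
  assumes "lo \<le> hi" and bounds: "\<And>p q. (p, q) \<in> leaf_pairs n \<Longrightarrow> lo \<le> u p q \<and> u p q \<le> hi"
  shows "mod_eq n (\<lambda>p q. max c (u p q)) (\<lambda>p q. max (max lo (min c hi)) (u p q))"
proof (cases "hi \<le> c")
  case True
  show ?thesis
  proof (rule mod_eq_shiftI[where c = "c - hi"])
    fix p q
    assume "(p, q) \<in> leaf_pairs n"
    then have "lo \<le> u p q" "u p q \<le> hi" using bounds by auto
    with True \<open>lo \<le> hi\<close> show "max c (u p q) = max (max lo (min c hi)) (u p q) + (c - hi)"
      by (auto simp: max_def min_def)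
  qed
next
  case False
  show ?thesis
  proof (rule mod_eq_shiftI[where c = 0])
    fix p q
    assume "(p, q) \<in> leaf_pairs n"
    then have "lo \<le> u p q" using bounds by auto
    with False show "max c (u p q) = max (max lo (min c hi)) (u p q) + 0"
      by (auto simp: max_def min_def)
  qed
qed

lemma truncation_classes_UNIV:
  assumes "lo \<le> hi" and "\<And>p q. (p, q) \<in> leaf_pairs n \<Longrightarrow> lo \<le> u p q \<and> u p q \<le> hi"
  shows "truncation_classes n u UNIV = truncation_classes n u {lo..hi}"
proof -
  have "max lo (min c hi) \<in> {lo..hi}" for c
    using \<open>lo \<le> hi\<close> by auto
  moreover have "mod_eq n (\<lambda>p q. max c (u p q)) (\<lambda>p q. max (max lo (min c hi)) (u p q))" for c
    using truncation_class_clamp[OF assms] .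
  ultimately show ?thesis
    unfolding truncation_classes_def by (blast intro: mod_eq_trans)
qed

lemma convex_combination_max:
  fixes a b x l :: real
  assumes "a \<le> b" "0 \<le> l" "l \<le> 1" and gap: "x \<le> a \<or> b \<le> x"
  shows "(1 - l) * max a x + l * max b x = max ((1 - l) * a + l * b) x"
proof -
  have between: "a \<le> (1 - l) * a + l * b" "(1 - l) * a + l * b \<le> b"
    using assms(1-3) mult_left_mono[of a b l] mult_left_mono[of a b "1 - l"]
    by (simp_all add: algebra_simps)
  from gap show ?thesis
  proof
    assume "x \<le> a"
    with \<open>a \<le> b\<close> between show ?thesis by simp
  next
    assume "b \<le> x"
    with \<open>a \<le> b\<close> between have "(1 - l) * max a x + l * max b x = (1 - l) * x + l * x"
      "max ((1 - l) * a + l * b) x = x" by simp_all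
    then show ?thesis by (simp add: algebra_simps)
  qed
qed

lemma ord_segment_truncations:
  assumes "a \<le> b" and gap: "\<And>p q. (p, q) \<in> leaf_pairs n \<Longrightarrow> u p q \<le> a \<or> b \<le> u p q"
  shows "ord_segment n (\<lambda>p q. max a (u p q)) (\<lambda>p q. max b (u p q)) =
    truncation_classes n u {a..b}"
proof -
  have "mod_eq n z (\<lambda>p q. (1 - l) * max a (u p q) + l * max b (u p q)) \<longleftrightarrow>
      mod_eq n z (\<lambda>p q. max ((1 - l) * a + l * b) (u p q))"
    if "0 \<le> l" "l \<le> 1" for z l
    using convex_combination_max[OF \<open>a \<le> b\<close> that gap] by (intro mod_eq_cong_right) simp
  moreover have "{a..b} = {(1 - l) * a + l * b | l. 0 \<le> l \<and> l \<le> 1}"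
    using closed_segment_eq_real_ivl1[OF \<open>a \<le> b\<close>] by (simp add: closed_segment_def)
  ultimately show ?thesis
    unfolding ord_segment_def truncation_classes_def by auto
qed

lemma UN_consecutive_intervals:
  fixes f :: "nat \<Rightarrow> 'a::linorder"
  assumes "2 \<le> k" "mono_on {1..k} f"
  shows "(\<Union>i\<in>{1..<k}. {f i..f (Suc i)}) = {f 1..f k}"
  using assms
proof (induction k rule: nat_induct_at_least)
  case base
  have "{1..<2::nat} = {1}" by auto
  then show ?case by (simp add: numeral_2_eq_2)
next
  case (Suc k)
  have "mono_on {1..k} f"
    using Suc.prems by (rule mono_on_subset) auto
  then have "(\<Union>i\<in>{1..<Suc k}. {f i..f (Suc i)}) = {f 1..f k} \<union> {f k..f (Suc k)}"
    using Suc.IH Suc.hyps by (simp add: atLeastLessThanSuc Un_commute)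
  also have "\<dots> = {f 1..f (Suc k)}"
    using Suc.hyps by (intro ivl_disj_un_two_touch(4) mono_onD[OF Suc.prems]) auto
  finally show ?case .
qed

lemma mono_on_value_between_ends:
  fixes f :: "nat \<Rightarrow> 'a::linorder"
  assumes mono: "mono_on {1..k} f" and "j \<in> {1..k}"
  shows "f 1 \<le> f j \<and> f j \<le> f k"
proof
  show "f 1 \<le> f j" using assms(2) by (intro mono_onD[OF mono]) auto
  show "f j \<le> f k" using assms(2) by (intro mono_onD[OF mono]) auto
qed

lemma mono_on_value_outside_gap:
  fixes f :: "nat \<Rightarrow> 'a::linorder"
  assumes mono: "mono_on {1..k} f" and "j \<in> {1..k}" "i \<in> {1..<k}"
  shows "f j \<le> f i \<or> f (Suc i) \<le> f j"
proof (cases "j \<le> i")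
  case True
  with assms(2,3) have "f j \<le> f i" by (intro mono_onD[OF mono]) auto
  then show ?thesis ..
next
  case False
  with assms(2,3) have "f (Suc i) \<le> f j" by (intro mono_onD[OF mono]) auto
  then show ?thesis ..
qed

theorem theorem4:
  fixes n k :: nat and u :: pvec and t :: "nat \<Rightarrow> real"
  assumes ultra: "is_ultrametric n u"
    and t_mono: "strict_mono_on {1..k} t"
    and t_range: "t ` {1..k} = speciation_times n u"
    and not_star: "k \<ge> 2"
  shows "trop_segment n u (\<lambda>p q. 0) =
         (\<Union>i \<in> {1..<k}. ord_segment n (\<lambda>p q. max (2 * t i) (u p q))
                                       (\<lambda>p q. max (2 * t (Suc i)) (u p q)))"
proof -
  have mono: "mono_on {1..k} (\<lambda>i. 2 * t i)"
    using strict_mono_on_imp_mono_on[OF t_mono] by (simp add: mono_on_def)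
  have entry: "\<exists>j\<in>{1..k}. u p q = 2 * t j" if "(p, q) \<in> leaf_pairs n" for p q
  proof -
    have "u p q / 2 \<in> t ` {1..k}"
      using that t_range unfolding speciation_times_def by blast
    then show ?thesis by force
  qed
  have bounds: "2 * t 1 \<le> u p q \<and> u p q \<le> 2 * t k" if "(p, q) \<in> leaf_pairs n" for p q
    using entry[OF that] mono_on_value_between_ends[OF mono] by metis
  have gap: "u p q \<le> 2 * t i \<or> 2 * t (Suc i) \<le> u p q"
    if "(p, q) \<in> leaf_pairs n" "i \<in> {1..<k}" for p q i
    using entry[OF that(1)] mono_on_value_outside_gap[OF mono _ that(2)] by metis
  have step: "2 * t i \<le> 2 * t (Suc i)" if "i \<in> {1..<k}" for i
    using that by (intro mono_onD[OF mono]) auto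
  have "2 * t 1 \<le> 2 * t k"
    using not_star by (intro mono_onD[OF mono]) auto
  then have "trop_segment n u (\<lambda>p q. 0) = truncation_classes n u {2 * t 1..2 * t k}"
    using bounds by (simp add: trop_segment_origin truncation_classes_UNIV)
  also have "\<dots> = truncation_classes n u (\<Union>i\<in>{1..<k}. {2 * t i..2 * t (Suc i)})"
    unfolding UN_consecutive_intervals[OF not_star mono] ..
  also have "\<dots> = (\<Union>i\<in>{1..<k}. truncation_classes n u {2 * t i..2 * t (Suc i)})"
    by (rule truncation_classes_UN)
  also have "\<dots> = (\<Union>i \<in> {1..<k}. ord_segment n (\<lambda>p q. max (2 * t i) (u p q))
                                       (\<lambda>p q. max (2 * t (Suc i)) (u p q)))"
    using gap step by (intro SUP_cong refl ord_segment_truncations[symmetric]) auto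
  finally show ?thesis .
qed

end
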